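(* Let $X=V(f)\subset\mathbb{P}^n$, $f=\sum_{u\in\mathcal{A}}c_ux^u$, be an irreducible hypersurface, not a cone, with $\operatorname{trop}(X)$ smooth. Let $P$ be a cell of $\operatorname{trop}(X)$, let $\widehat P$ be the corresponding cell of $\operatorname{trop}(\widehat X)$, and let $\mathcal{A}_0=\mathcal{A}(p)$ for $p$ in the relative interior of $\widehat P$. Let $u\in\mathcal{A}\setminus\mathcal{A}_0$ be such that $\{u\}\cup\mathcal{A}_0$ spans a simplex of the triangulation, and let $Q$ be the corresponding facet of $P$, namely the intersection of the affine span of $P$ with the image in $\mathbb{R}^{n+1}/\mathbb{R}(1,\dots,1)$ of $\{q\in\mathbb{R}^{n+1}:\nu(c_u)-\langle q,u\rangle=\nu(c_v)-\langle q,v\rangle\}$ for $v\in\mathcal{A}_0$. Then for any $v\in\mathcal{A}_0$ and any $q$ in the affine span of $\widehat P$, $$\delta_Q(q)=\phi_q(u)-\phi_q(v),$$ where $\phi_q(w)=\nu(c_w)-\langle q,w\rangle$ and $\delta_Q(q)$ denotes the lattice distance from (the image of) $q$ to $Q$.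
   Context: $\mathbb{K}$ algebraically closed of characteristic zero with nontrivial non-Archimedean valuation $\nu$ trivial on integers. $\mathcal{A}\subset\mathbb{Z}^{n+1}$, $c_u\neq0$, $f$ homogeneous involving all variables. For $q\in\mathbb{R}^{n+1}$, $\mathcal{A}(q)$ is the set of $w\in\mathcal{A}$ minimizing $\nu(c_w)-\langle q,w\rangle$; $\operatorname{trop}(\widehat X)=\{q:\#\mathcal{A}(q)>1\}$, with cells determined by the value of $\mathcal{A}(q)$ (dual to the regular subdivision of $\operatorname{conv}\mathcal{A}$ given by the sets $\operatorname{conv}\mathcal{A}(q)$); $\operatorname{trop}(X)$ is its image in $\mathbb{R}^{n+1}/\mathbb{R}(1,\dots,1)\cong\mathbb{R}^n$ with the induced cells. Smooth: the subdivision is a unimodular triangulation. Lattice distance: for a rational polyhedron $P$ with facet $Q$, $v_Q$ is the primitive inward normal (primitive integral functional on the direction lattice of the affine span of $P$, vanishing on the directions of $Q$, positive towards $P$), and $\delta_Q(q)=\langle q-q',v_Q\rangle$ for any $q'\in Q$; it extends to the affine span of $P$. *)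

theory Defs
  imports "HOL-Analysis.Analysis" "HOL-Computational_Algebra.Polynomial"
begin

text \<open>A polynomial f = sum of c_u x^u is represented by its coefficient function
  c on exponent vectors; its support is the set A.\<close>

definition supp :: "('a \<Rightarrow> 'k::zero) \<Rightarrow> 'a set" where
  "supp c = {w. c w \<noteq> 0}"

definition homogeneous_poly :: "(nat^'i \<Rightarrow> 'k::zero) \<Rightarrow> bool" where
  "homogeneous_poly c \<longleftrightarrow> (\<exists>d. \<forall>w\<in>supp c. (\<Sum>i\<in>UNIV. w$i) = d)"

definition involves_all_vars :: "(nat^'i \<Rightarrow> 'k::zero) \<Rightarrow> bool" where
  "involves_all_vars c \<longleftrightarrow> (\<forall>i. \<exists>w\<in>supp c. w$i \<noteq> 0)"

definition pmult :: "(nat^'i \<Rightarrow> 'k::comm_ring_1) \<Rightarrow> (nat^'i \<Rightarrow> 'k) \<Rightarrow> nat^'i \<Rightarrow> 'k" where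
  "pmult g h w = (\<Sum>ab\<in>{(a, b). a + b = w}. g (fst ab) * h (snd ab))"

definition is_const_poly :: "(nat^'i \<Rightarrow> 'k::zero) \<Rightarrow> bool" where
  "is_const_poly g \<longleftrightarrow> supp g \<subseteq> {0}"

definition irreducible_mpoly :: "(nat^'i \<Rightarrow> 'k::comm_ring_1) \<Rightarrow> bool" where
  "irreducible_mpoly f \<longleftrightarrow> finite (supp f) \<and> \<not> is_const_poly f \<and>
     (\<forall>g h. finite (supp g) \<and> finite (supp h) \<and> f = pmult g h
        \<longrightarrow> is_const_poly g \<or> is_const_poly h)"

definition peval :: "(nat^'i::finite \<Rightarrow> 'k::comm_ring_1) \<Rightarrow> 'k^'i \<Rightarrow> 'k" where
  "peval f x = (\<Sum>w\<in>supp f. f w * (\<Prod>i\<in>UNIV. (x$i) ^ (w$i)))"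

text \<open>X = V(f) is a cone (with vertex [p]) if every line through [p] and a point of X
  lies in X; on the affine cone: f(x) = 0 implies f(x + t p) = 0 for all t.\<close>
definition is_cone :: "(nat^'i::finite \<Rightarrow> 'k::field) \<Rightarrow> bool" where
  "is_cone f \<longleftrightarrow> (\<exists>p::'k^'i. p \<noteq> 0 \<and>
      (\<forall>x. peval f x = 0 \<longrightarrow> (\<forall>t. peval f (x + t *s p) = 0)))"

definition nonarch_valuation :: "('k::field_char_0 \<Rightarrow> real) \<Rightarrow> bool" where
  "nonarch_valuation \<nu> \<longleftrightarrow>
     (\<forall>x y. x \<noteq> 0 \<and> y \<noteq> 0 \<longrightarrow> \<nu> (x * y) = \<nu> x + \<nu> y) \<and>
     (\<forall>x y. x \<noteq> 0 \<and> y \<noteq> 0 \<and> x + y \<noteq> 0 \<longrightarrow> min (\<nu> x) (\<nu> y) \<le> \<nu> (x + y)) \<and>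
     (\<exists>x. x \<noteq> 0 \<and> \<nu> x \<noteq> 0) \<and>
     (\<forall>k::int. k \<noteq> 0 \<longrightarrow> \<nu> (of_int k) = 0)"

definition rvec :: "nat^'i \<Rightarrow> real^'i" where
  "rvec w = (\<chi> i. real (w$i))"

definition phi :: "('k \<Rightarrow> real) \<Rightarrow> (nat^'i::finite \<Rightarrow> 'k) \<Rightarrow> real^'i \<Rightarrow> nat^'i \<Rightarrow> real" where
  "phi \<nu> c q w = \<nu> (c w) - q \<bullet> rvec w"

definition Amin :: "('k::zero \<Rightarrow> real) \<Rightarrow> (nat^'i::finite \<Rightarrow> 'k) \<Rightarrow> real^'i \<Rightarrow> (nat^'i) set" where
  "Amin \<nu> c q = {w\<in>supp c. \<forall>w'\<in>supp c. phi \<nu> c q w \<le> phi \<nu> c q w'}"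

definition trop_hat :: "('k::zero \<Rightarrow> real) \<Rightarrow> (nat^'i::finite \<Rightarrow> 'k) \<Rightarrow> (real^'i) set" where
  "trop_hat \<nu> c = {q. card (Amin \<nu> c q) > 1}"

definition trop_hat_cell :: "('k::zero \<Rightarrow> real) \<Rightarrow> (nat^'i::finite \<Rightarrow> 'k) \<Rightarrow> (real^'i) set \<Rightarrow> bool" where
  "trop_hat_cell \<nu> c C \<longleftrightarrow> (\<exists>S. card S > 1 \<and> {q. Amin \<nu> c q = S} \<noteq> {} \<and>
      C = closure {q. Amin \<nu> c q = S})"

text \<open>The identification R^{n+1}/R(1,...,1) = R^n, coordinates indexed by 'n option
  (None being the 0-th coordinate).\<close>
definition proj :: "real^('n::finite option) \<Rightarrow> real^'n" where
  "proj x = (\<chi> i. x$(Some i) - x$None)"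

definition int_vecs :: "(real^'m) set" where
  "int_vecs = {x. \<forall>i. x$i \<in> \<int>}"

definition int_comb :: "(real^'m) set \<Rightarrow> (real^'m) set" where
  "int_comb S = {x. \<exists>a::real^'m \<Rightarrow> int. x = (\<Sum>s\<in>S. of_int (a s) *\<^sub>R s)}"

definition dir_lattice :: "(real^'m) set \<Rightarrow> (real^'m) set" where
  "dir_lattice P = span {a - b | a b. a \<in> P \<and> b \<in> P} \<inter> int_vecs"

definition primitive_inward_normal ::
  "(real^'m) set \<Rightarrow> (real^'m) set \<Rightarrow> (real^'m \<Rightarrow> real) \<Rightarrow> bool" where
  "primitive_inward_normal P Q l \<longleftrightarrow> linear l \<and>
     (\<forall>x\<in>dir_lattice P. l x \<in> \<int>) \<and> (\<exists>x\<in>dir_lattice P. l x = 1) \<and>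
     (\<forall>x\<in>Q. \<forall>y\<in>Q. l (x - y) = 0) \<and>
     (\<forall>x\<in>P. \<forall>y\<in>Q. 0 \<le> l (x - y)) \<and> (\<exists>x\<in>P. \<exists>y\<in>Q. 0 < l (x - y))"

definition lattice_dist :: "(real^'m) set \<Rightarrow> (real^'m) set \<Rightarrow> real^'m \<Rightarrow> real" where
  "lattice_dist P Q x =
     (THE d. \<exists>l. primitive_inward_normal P Q l \<and> (\<forall>y\<in>Q. d = l (x - y)))"

section \<open>Smoothness: the regular subdivision is a unimodular triangulation\<close>

definition smooth_trop :: "('k::zero \<Rightarrow> real) \<Rightarrow> (nat^'i::finite \<Rightarrow> 'k) \<Rightarrow> bool" where
  "smooth_trop \<nu> c \<longleftrightarrow>
     (\<forall>q. \<not> affine_dependent (rvec ` Amin \<nu> c q)) \<and>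
     (\<forall>q. \<forall>w0\<in>Amin \<nu> c q.
        affine hull (rvec ` Amin \<nu> c q) = affine hull (rvec ` supp c) \<longrightarrow>
        span {a - b | a b. a \<in> rvec ` supp c \<and> b \<in> rvec ` supp c} \<inter> int_vecs
          \<subseteq> int_comb ((\<lambda>w. rvec w - rvec w0) ` Amin \<nu> c q))"

end

theory Submission
  imports Defs
begin

text \<open>By homogeneity, \<open>\<phi>\<^sub>q(u) - \<phi>\<^sub>q(v)\<close> only depends on the image \<open>y\<close> of \<open>q\<close> in \<open>\<real>\<^sup>n\<close>, where it
  is an affine function \<open>\<alpha> + y \<bullet> b\<close> with \<open>b\<close> integral. On the affine span of \<open>P\<close> the facet \<open>Q\<close>
  is its zero set, it is nonnegative on \<open>P\<close> and positive at \<open>p\<close>; hence every primitive inward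
  normal of \<open>Q\<close> is a positive multiple of \<open>y \<mapsto> y \<bullet> b\<close>, and equal to it as soon as this
  functional takes the value 1 on the direction lattice of \<open>P\<close>. That is where smoothness
  enters: \<open>{u} \<union> A(p)\<close> is a face of a unimodular simplex, so some integral \<open>z\<close> has
  \<open>z \<bullet> (v - u) = 1\<close> and is orthogonal to all edges of \<open>A(p)\<close>; translating \<open>p\<close> by \<open>z\<close> stays in the
  affine span of the cell and gives a lattice direction on which the functional is 1.\<close>

section \<open>Integral dual vectors\<close>

lemma int_vecs_iff: "x \<in> int_vecs \<longleftrightarrow> (\<forall>i. x $ i \<in> \<int>)"
  by (simp add: int_vecs_def)

lemma int_vecs_diff: "x \<in> int_vecs \<Longrightarrow> y \<in> int_vecs \<Longrightarrow> x - y \<in> int_vecs"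
  by (simp add: int_vecs_iff)

lemma int_vecs_scaleR: "k \<in> \<int> \<Longrightarrow> x \<in> int_vecs \<Longrightarrow> k *\<^sub>R x \<in> int_vecs"
  by (simp add: int_vecs_iff)

lemma int_vecs_sum: "(\<And>s. s \<in> S \<Longrightarrow> f s \<in> int_vecs) \<Longrightarrow> sum f S \<in> int_vecs"
  by (auto simp: int_vecs_iff sum_component intro!: Ints_sum)

lemma inner_int_vecs: "x \<in> int_vecs \<Longrightarrow> y \<in> int_vecs \<Longrightarrow> x \<bullet> y \<in> \<int>"
  by (auto simp: int_vecs_iff inner_vec_def intro!: Ints_sum Ints_mult)

lemma int_subgroup_generator:
  fixes I :: "int set"
  assumes closed: "\<And>a b t. a \<in> I \<Longrightarrow> b \<in> I \<Longrightarrow> a - t * b \<in> I"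
    and k: "k \<in> I" "k \<noteq> 0"
  obtains m where "m > 0" "m \<in> I" "\<And>a. a \<in> I \<Longrightarrow> m dvd a"
proof -
  have "k - 2 * k \<in> I" using closed[OF k(1) k(1)] .
  then have "\<bar>k\<bar> \<in> I" using k(1) by (cases "k \<ge> 0") auto
  then have ex: "\<exists>n::nat. n > 0 \<and> int n \<in> I"
    using k(2) by (intro exI[of _ "nat \<bar>k\<bar>"]) auto
  define m where "m = (LEAST n::nat. n > 0 \<and> int n \<in> I)"
  have m: "m > 0" "int m \<in> I"
    using LeastI_ex[OF ex] unfolding m_def by auto
  have minimal: "\<not> (n > 0 \<and> int n \<in> I)" if "n < m" for n
    using not_less_Least[of n "\<lambda>n. n > 0 \<and> int n \<in> I"] that unfolding m_def by blast
  have "int m dvd a" if a: "a \<in> I" for a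
  proof -
    have "a mod int m \<in> I"
      using closed[OF a m(2), of "a div int m"] by (simp add: minus_div_mult_eq_mod)
    then have r: "int (nat (a mod int m)) \<in> I" using m(1) by simp
    have "nat (a mod int m) < m" using m(1) by (simp add: nat_less_iff)
    from minimal[OF this] r have "\<not> (nat (a mod int m) > 0)" by auto
    moreover have "0 \<le> a mod int m" using m(1) by simp
    ultimately show ?thesis by (simp add: dvd_eq_mod_eq_0)
  qed
  with m show ?thesis by (intro that[of "int m"]) auto
qed

lemma int_vec_primitive_dual:
  fixes c :: "real^'m"
  assumes c: "c \<in> int_vecs"
    and primitive: "\<And>g::int. g \<ge> 2 \<Longrightarrow> (1 / of_int g) *\<^sub>R c \<notin> int_vecs"
  shows "\<exists>z\<in>int_vecs. z \<bullet> c = 1"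
proof -
  define I where "I = {k::int. \<exists>z\<in>int_vecs. z \<bullet> c = of_int k}"
  have closed: "k1 - t * k2 \<in> I" if k1: "k1 \<in> I" and k2: "k2 \<in> I" for k1 k2 t
  proof -
    obtain z1 where "z1 \<in> int_vecs" "z1 \<bullet> c = of_int k1" using k1 unfolding I_def by auto
    moreover obtain z2 where "z2 \<in> int_vecs" "z2 \<bullet> c = of_int k2" using k2 unfolding I_def by auto
    ultimately show ?thesis unfolding I_def
      by (auto intro!: bexI[of _ "z1 - of_int t *\<^sub>R z2"] int_vecs_diff int_vecs_scaleR
          simp: inner_diff_left)
  qed
  have component: "\<exists>k\<in>I. c $ i = of_int k" for i
  proof -
    obtain k where k: "c $ i = of_int k" using c unfolding int_vecs_iff by (meson Ints_cases)
    have "axis i 1 \<in> int_vecs" by (simp add: int_vecs_iff axis_def)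
    moreover have "axis i 1 \<bullet> c = c $ i" by (simp add: cart_eq_inner_axis inner_commute)
    ultimately show ?thesis using k unfolding I_def by auto
  qed
  have "c \<noteq> 0"
    using primitive[of 2] by (auto simp: int_vecs_iff)
  then obtain i where "c $ i \<noteq> 0" by (auto simp: vec_eq_iff)
  with component obtain k where "k \<in> I" "k \<noteq> 0" by fastforce
  then obtain m where m: "m > 0" "m \<in> I" and dvd: "\<And>a. a \<in> I \<Longrightarrow> m dvd a"
    using int_subgroup_generator[OF closed] by metis
  have "(1 / of_int m) *\<^sub>R c \<in> int_vecs"
    unfolding int_vecs_iff
  proof
    fix j
    obtain kj where "kj \<in> I" "c $ j = of_int kj" using component by blast
    moreover then obtain t where "kj = m * t" using dvd by (auto elim: dvdE)
    ultimately show "((1 / of_int m) *\<^sub>R c) $ j \<in> \<int>" using m(1) by simp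
  qed
  with primitive have "\<not> m \<ge> 2" by blast
  with m(1) have "m = 1" by simp
  with m(2) show ?thesis unfolding I_def by auto
qed

lemma independent_sum_coeff_eq:
  fixes B :: "'a::real_vector set"
  assumes "independent B" "finite B"
    and "(\<Sum>s\<in>B. f s *\<^sub>R s) = (\<Sum>s\<in>B. g s *\<^sub>R s)" and "s \<in> B"
  shows "f s = g s"
proof -
  have "(\<Sum>s\<in>B. (f s - g s) *\<^sub>R s) = 0"
    using assms(3) by (simp add: scaleR_diff_left sum_subtractf)
  then show ?thesis
    using independentD[OF assms(1,2) subset_refl, of "\<lambda>s. f s - g s"] assms(4) by simp
qed

lemma int_comb_Diff_saturated:
  fixes B :: "(real^'m) set"
  assumes "independent B" "finite B" "b \<in> B"
    and saturated: "span B \<inter> int_vecs \<subseteq> int_comb B"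
  shows "span (B - {b}) \<inter> int_vecs \<subseteq> int_comb (B - {b})"
proof
  fix x assume x: "x \<in> span (B - {b}) \<inter> int_vecs"
  then have "x \<in> int_comb B" using saturated span_mono[of "B - {b}" B] by auto
  then obtain a where a: "x = (\<Sum>s\<in>B. of_int (a s) *\<^sub>R s)" unfolding int_comb_def by auto
  obtain r where r: "x = (\<Sum>s\<in>B - {b}. r s *\<^sub>R s)"
    using x real_vector.span_finite[of "B - {b}"] assms(2) by auto
  have "(\<Sum>s\<in>B. (if s = b then 0 else r s) *\<^sub>R s) = (\<Sum>s\<in>B - {b}. r s *\<^sub>R s)"
    by (subst sum.remove[OF assms(2,3)]) (auto intro: sum.cong)
  then have "(\<Sum>s\<in>B. of_int (a s) *\<^sub>R s) = (\<Sum>s\<in>B. (if s = b then 0 else r s) *\<^sub>R s)"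
    using a r by simp
  from independent_sum_coeff_eq[OF assms(1,2) this assms(3)] have "a b = 0" by simp
  then have "x = (\<Sum>s\<in>B - {b}. of_int (a s) *\<^sub>R s)"
    using a assms(2,3) by (simp add: sum.remove[of B b])
  then show "x \<in> int_comb (B - {b})" unfolding int_comb_def by auto
qed

text \<open>The coefficient of \<open>b\<close> in \<open>c / g\<close> would be the non-integer \<open>1 / g\<close>.\<close>

lemma saturated_residual_primitive:
  fixes B :: "(real^'m) set"
  assumes "independent B" "finite B" "b \<in> B"
    and saturated: "span B \<inter> int_vecs \<subseteq> int_comb B"
    and g: "g \<ge> 2"
  shows "(1 / of_int g) *\<^sub>R (b - (\<Sum>s\<in>B - {b}. r s *\<^sub>R s)) \<notin> int_vecs"
proof
  define y where "y = (1 / of_int g) *\<^sub>R (b - (\<Sum>s\<in>B - {b}. r s *\<^sub>R s))"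
  assume "y \<in> int_vecs"
  moreover have "y \<in> span B"
    unfolding y_def using assms(3) by (intro span_scale span_diff span_sum) (auto intro: span_base)
  ultimately obtain a where a: "y = (\<Sum>s\<in>B. of_int (a s) *\<^sub>R s)"
    using saturated unfolding int_comb_def by auto
  define h where "h s = (if s = b then 1 / of_int g else - r s / of_int g)" for s
  have "y = h b *\<^sub>R b + (\<Sum>s\<in>B - {b}. h s *\<^sub>R s)"
    unfolding y_def h_def by (simp add: scaleR_diff_right scaleR_sum_right sum_negf)
  also have "\<dots> = (\<Sum>s\<in>B. h s *\<^sub>R s)" using assms(2,3) by (simp add: sum.remove[of B b])
  finally have "(\<Sum>s\<in>B. of_int (a s) *\<^sub>R s) = (\<Sum>s\<in>B. h s *\<^sub>R s)" using a by simp
  from independent_sum_coeff_eq[OF assms(1,2) this assms(3)]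
  have "of_int (a b) = 1 / (of_int g :: real)" unfolding h_def by simp
  moreover have "0 < 1 / (of_int g :: real)" "1 / (of_int g :: real) < 1" using g by auto
  ultimately show False by (metis of_int_0_less_iff of_int_less_1_iff not_less zless_imp_add1_zle add_0)
qed

text \<open>Subtracting from \<open>b\<close> its components along \<open>B - {b}\<close>, measured by their dual vectors, leaves
  a primitive integer vector; a functional with value 1 on it, corrected by the same dual
  vectors, is dual to \<open>b\<close>.\<close>

lemma saturated_basis_dual:
  fixes B :: "(real^'m) set"
  assumes "independent B" "finite B" "B \<subseteq> int_vecs"
    and "span B \<inter> int_vecs \<subseteq> int_comb B" and "b \<in> B"
  shows "\<exists>z\<in>int_vecs. z \<bullet> b = 1 \<and> (\<forall>b'\<in>B - {b}. z \<bullet> b' = 0)"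
  using assms
proof (induction "card B" arbitrary: B b rule: less_induct)
  case less
  define B' where "B' = B - {b}"
  have indep': "independent B'" and fin': "finite B'" and int': "B' \<subseteq> int_vecs"
    using less.prems independent_mono[OF less.prems(1)] unfolding B'_def by auto
  have "\<forall>b'\<in>B'. \<exists>z\<in>int_vecs. z \<bullet> b' = 1 \<and> (\<forall>b''\<in>B' - {b'}. z \<bullet> b'' = 0)"
    using less.hyps[OF _ indep' fin' int'] int_comb_Diff_saturated[OF less.prems(1,2,5,4)]
      card_Diff1_less[OF less.prems(2,5)] unfolding B'_def by blast
  then obtain zf where zf: "\<And>b'. b' \<in> B' \<Longrightarrow>
      zf b' \<in> int_vecs \<and> zf b' \<bullet> b' = 1 \<and> (\<forall>b''\<in>B' - {b'}. zf b' \<bullet> b'' = 0)"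
    by metis
  define c where "c = b - (\<Sum>b'\<in>B'. (zf b' \<bullet> b) *\<^sub>R b')"
  have "c \<in> int_vecs"
    unfolding c_def using zf int' less.prems(3,5)
    by (intro int_vecs_diff int_vecs_sum int_vecs_scaleR inner_int_vecs) auto
  moreover have "(1 / of_int g) *\<^sub>R c \<notin> int_vecs" if "g \<ge> 2" for g :: int
    unfolding c_def B'_def using saturated_residual_primitive[OF less.prems(1,2,5,4) that] .
  ultimately obtain z0 where z0: "z0 \<in> int_vecs" "z0 \<bullet> c = 1"
    using int_vec_primitive_dual by blast
  define z where "z = z0 - (\<Sum>b'\<in>B'. (z0 \<bullet> b') *\<^sub>R zf b')"
  have "z \<in> int_vecs"
    unfolding z_def using zf int' z0(1)
    by (intro int_vecs_diff int_vecs_sum int_vecs_scaleR inner_int_vecs) auto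
  moreover have "z \<bullet> b = 1"
    using z0(2) unfolding z_def c_def
    by (simp add: inner_diff_left inner_diff_right inner_sum_left inner_sum_right mult.commute)
  moreover have "z \<bullet> b'' = 0" if b'': "b'' \<in> B'" for b''
  proof -
    have "zf b' \<bullet> b'' = 0" if "b' \<in> B' - {b''}" for b'
      using zf that b'' by blast
    then have "(\<Sum>b'\<in>B'. (z0 \<bullet> b') * (zf b' \<bullet> b'')) = (z0 \<bullet> b'') * (zf b'' \<bullet> b'')"
      by (subst sum.remove[OF fin' b'']) (simp add: sum.neutral)
    then show ?thesis
      using zf[OF b''] unfolding z_def by (simp add: inner_diff_left inner_sum_left)
  qed
  ultimately show ?case unfolding B'_def by blast
qed

section \<open>Lattice distance to the zero set of an affine function\<close>

lemma span_diffs_eq_translated_affine_hull: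
  fixes S :: "'a::real_vector set"
  assumes "a \<in> S"
  shows "span {x - y |x y. x \<in> S \<and> y \<in> S} = (\<lambda>x. x - a) ` (affine hull S)"
proof -
  have "span {x - y |x y. x \<in> S \<and> y \<in> S} \<subseteq> span ((\<lambda>x. x - a) ` S)"
  proof (rule span_minimal)
    show "{x - y |x y. x \<in> S \<and> y \<in> S} \<subseteq> span ((\<lambda>x. x - a) ` S)"
    proof clarify
      fix x y assume "x \<in> S" "y \<in> S"
      then have "(x - a) - (y - a) \<in> span ((\<lambda>x. x - a) ` S)"
        by (intro span_diff span_base) auto
      then show "x - y \<in> span ((\<lambda>x. x - a) ` S)" by simp
    qed
  qed simp
  moreover have "span ((\<lambda>x. x - a) ` S) \<subseteq> span {x - y |x y. x \<in> S \<and> y \<in> S}"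
    using assms by (intro span_mono) auto
  ultimately show ?thesis using diffs_affine_hull_span[OF assms] by blast
qed

lemma diff_affine_hull_in_span_diffs:
  fixes S :: "'a::real_vector set"
  assumes "x \<in> affine hull S" "y \<in> affine hull S"
  shows "x - y \<in> span {a - b |a b. a \<in> S \<and> b \<in> S}"
proof -
  obtain a where a: "a \<in> S" using assms by fastforce
  have "x - a \<in> span {a - b |a b. a \<in> S \<and> b \<in> S}" "y - a \<in> span {a - b |a b. a \<in> S \<and> b \<in> S}"
    using assms unfolding span_diffs_eq_translated_affine_hull[OF a] by auto
  then have "(x - a) - (y - a) \<in> span {a - b |a b. a \<in> S \<and> b \<in> S}" by (rule span_diff)
  then show ?thesis by simp
qed

lemma affine_hull_add_span_diffs:
  fixes S :: "'a::real_vector set"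
  assumes "y \<in> affine hull S" "w \<in> span {a - b |a b. a \<in> S \<and> b \<in> S}"
  shows "y + w \<in> affine hull S"
proof -
  obtain a where a: "a \<in> S" using assms by fastforce
  then obtain x where x: "x \<in> affine hull S" "w = x - a"
    using assms(2) unfolding span_diffs_eq_translated_affine_hull[OF a] by blast
  then show ?thesis
    using mem_affine_3_minus[OF affine_affine_hull assms(1) x(1) hull_inc[OF a], of 1] by simp
qed

lemma normal_to_affine_hull_exists:
  fixes A :: "'a::euclidean_space set"
  assumes a: "a \<in> A" and x: "x \<notin> affine hull A"
  obtains z where "\<And>y. y \<in> A \<Longrightarrow> z \<bullet> y = z \<bullet> a" "z \<bullet> a < z \<bullet> x"
proof -
  have "x - a \<notin> span ((\<lambda>y. y - a) ` A)"
    using x unfolding diffs_affine_hull_span[OF a, symmetric] by auto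
  moreover obtain y z where yz: "y \<in> span ((\<lambda>y. y - a) ` A)"
      "\<And>w. w \<in> span ((\<lambda>y. y - a) ` A) \<Longrightarrow> orthogonal z w" "x - a = y + z"
    by (metis orthogonal_subspace_decomp_exists)
  ultimately have "z \<noteq> 0" by auto
  moreover have "z \<bullet> y = 0" using yz(2)[OF yz(1)] by (simp add: orthogonal_def)
  ultimately have "z \<bullet> (x - a) > 0" using yz(3) by (simp add: inner_add_right)
  then have "z \<bullet> a < z \<bullet> x" by (simp add: inner_diff_right)
  moreover have "z \<bullet> y' = z \<bullet> a" if "y' \<in> A" for y'
    using yz(2)[OF span_base, of "y' - a"] that by (auto simp: orthogonal_def inner_diff_right)
  ultimately show ?thesis using that by blast
qed

context
  fixes P :: "(real^'m) set" and l :: "real^'m \<Rightarrow> real" and a :: real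
  assumes linear: "linear l"
    and nonneg: "\<And>y. y \<in> P \<Longrightarrow> 0 \<le> a + l y"
    and positive: "\<exists>y\<in>P. 0 < a + l y"
    and vanishes: "\<exists>y\<in>affine hull P. a + l y = 0"
begin

text \<open>Directions of \<open>P\<close> in the kernel of \<open>l\<close> are directions of the facet, so any inward normal
  vanishes on them.\<close>

lemma primitive_inward_normal_proportional:
  assumes normal: "primitive_inward_normal P (affine hull P \<inter> {y. a + l y = 0}) l'"
  obtains \<mu> where "\<mu> > 0" "\<And>w. w \<in> span {x - y |x y. x \<in> P \<and> y \<in> P} \<Longrightarrow> l' w = \<mu> * l w"
proof -
  define D where "D = span {x - y |x y. x \<in> P \<and> y \<in> P}"
  define Q where "Q = affine hull P \<inter> {y. a + l y = 0}"
  have lin': "linear l'" using normal unfolding primitive_inward_normal_def by blast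
  obtain y0 where y0: "y0 \<in> Q" using vanishes unfolding Q_def by blast
  obtain p where p: "p \<in> P" "0 < a + l p" using positive by blast
  have diffD: "x - y \<in> D" if "x \<in> affine hull P" "y \<in> affine hull P" for x y
    unfolding D_def using that by (rule diff_affine_hull_in_span_diffs)
  have lp: "l (p - y0) = a + l p" using y0 linear_diff[OF linear] unfolding Q_def by simp
  define \<mu> where "\<mu> = l' (p - y0) / (a + l p)"
  have scaled: "l' w = \<mu> * l w" if "w \<in> D" for w
  proof -
    define w' where "w' = w - (l w / (a + l p)) *\<^sub>R (p - y0)"
    have "p - y0 \<in> D" using diffD[OF hull_inc[OF p(1)]] y0 unfolding Q_def by blast
    then have "w' \<in> D"
      unfolding w'_def D_def using that unfolding D_def by (blast intro: span_diff span_scale)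
    moreover have "l w' = l w - (l w / (a + l p)) * l (p - y0)"
      unfolding w'_def using linear_diff[OF linear] linear_scale[OF linear] by simp
    then have "l w' = 0" using lp p(2) by simp
    ultimately have "y0 + w' \<in> Q"
      using y0 affine_hull_add_span_diffs linear_add[OF linear] unfolding Q_def D_def by auto
    then have "l' w' = 0"
      using normal y0 unfolding primitive_inward_normal_def Q_def[symmetric] by (metis add_diff_cancel_left')
    then show ?thesis
      unfolding w'_def \<mu>_def using linear_diff[OF lin'] linear_scale[OF lin'] by simp
  qed
  moreover have "\<mu> > 0"
  proof -
    obtain x y where xy: "x \<in> P" "y \<in> Q" "0 < l' (x - y)"
      using normal unfolding primitive_inward_normal_def Q_def by blast
    then have "l (x - y) = a + l x" using linear_diff[OF linear] unfolding Q_def by simp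
    moreover have "x - y \<in> D" using diffD[OF hull_inc[OF xy(1)]] xy(2) unfolding Q_def by blast
    ultimately show ?thesis
      using scaled xy nonneg[OF xy(1)] by (metis mult_nonpos_nonneg not_le)
  qed
  ultimately show ?thesis using that unfolding D_def by blast
qed

context
  assumes integral: "\<And>x. x \<in> dir_lattice P \<Longrightarrow> l x \<in> \<int>"
    and primitive: "\<exists>x\<in>dir_lattice P. l x = 1"
begin

lemma primitive_inward_normal_affine_function:
  "primitive_inward_normal P (affine hull P \<inter> {y. a + l y = 0}) l"
proof -
  have diff: "l (x - y) = (a + l x) - (a + l y)" for x y
    using linear_diff[OF linear] by simp
  obtain y0 where y0: "y0 \<in> affine hull P" "a + l y0 = 0" using vanishes by blast
  obtain p where p: "p \<in> P" "0 < a + l p" using positive by blast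
  show ?thesis
    unfolding primitive_inward_normal_def
  proof (intro conjI ballI)
    show "\<exists>x\<in>P. \<exists>y\<in>affine hull P \<inter> {y. a + l y = 0}. 0 < l (x - y)"
      using p y0 by (intro bexI[of _ p] bexI[of _ y0]) (auto simp: diff)
  qed (use linear integral primitive in \<open>auto simp: diff dest!: nonneg\<close>)
qed

lemma primitive_inward_normal_unique:
  assumes normal: "primitive_inward_normal P (affine hull P \<inter> {y. a + l y = 0}) l'"
    and w: "w \<in> span {x - y |x y. x \<in> P \<and> y \<in> P}"
  shows "l' w = l w"
proof -
  obtain \<mu> where "\<mu> > 0"
    and proportional: "\<And>w. w \<in> span {x - y |x y. x \<in> P \<and> y \<in> P} \<Longrightarrow> l' w = \<mu> * l w"
    using primitive_inward_normal_proportional[OF normal] by blast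
  have scaled: "l' x = \<mu> * l x" if "x \<in> dir_lattice P" for x
    using proportional that unfolding dir_lattice_def by blast
  have "\<mu> \<ge> 1"
  proof -
    obtain x where x: "x \<in> dir_lattice P" "l x = 1" using primitive by blast
    then have "l' x = \<mu>" using scaled by simp
    moreover have "l' x \<in> \<int>" using normal x(1) unfolding primitive_inward_normal_def by blast
    ultimately show ?thesis using \<open>\<mu> > 0\<close> Ints_nonzero_abs_ge1[of \<mu>] by simp
  qed
  moreover have "\<mu> \<le> 1"
  proof -
    obtain x where x: "x \<in> dir_lattice P" "l' x = 1"
      using normal unfolding primitive_inward_normal_def by blast
    then have "\<mu> * l x = 1" using scaled by simp
    moreover have "l x \<in> \<int>" using integral x(1) .
    moreover have "l x > 0" using \<open>\<mu> * l x = 1\<close> \<open>\<mu> > 0\<close> zero_less_mult_pos[of \<mu> "l x"] by simp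
    ultimately have "l x \<ge> 1" using Ints_nonzero_abs_ge1[of "l x"] by simp
    then show ?thesis using \<open>\<mu> * l x = 1\<close> \<open>\<mu> > 0\<close> mult_left_mono[of 1 "l x" \<mu>] by simp
  qed
  ultimately show ?thesis using proportional[OF w] by simp
qed

lemma lattice_dist_affine_function:
  assumes x: "x \<in> affine hull P"
  shows "lattice_dist P (affine hull P \<inter> {y. a + l y = 0}) x = a + l x"
  unfolding lattice_dist_def
proof (rule the_equality)
  have "l (x - y) = a + l x" if "a + l y = 0" for y
    using that linear_diff[OF linear] by simp
  then show "\<exists>l'. primitive_inward_normal P (affine hull P \<inter> {y. a + l y = 0}) l' \<and>
      (\<forall>y\<in>affine hull P \<inter> {y. a + l y = 0}. a + l x = l' (x - y))"
    using primitive_inward_normal_affine_function by auto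
next
  fix d assume "\<exists>l'. primitive_inward_normal P (affine hull P \<inter> {y. a + l y = 0}) l' \<and>
      (\<forall>y\<in>affine hull P \<inter> {y. a + l y = 0}. d = l' (x - y))"
  then obtain l' where l': "primitive_inward_normal P (affine hull P \<inter> {y. a + l y = 0}) l'"
    and d: "\<forall>y\<in>affine hull P \<inter> {y. a + l y = 0}. d = l' (x - y)" by blast
  obtain y0 where y0: "y0 \<in> affine hull P" "a + l y0 = 0" using vanishes by blast
  have "d = l' (x - y0)" using d y0 by blast
  also have "\<dots> = l (x - y0)"
    using primitive_inward_normal_unique[OF l' diff_affine_hull_in_span_diffs[OF x y0(1)]] .
  also have "\<dots> = a + l x" using y0(2) linear_diff[OF linear] by simp
  finally show "d = a + l x" .
qed

end

end

section \<open>Strata of the regular subdivision\<close>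

lemma Amin_subset_supp: "Amin \<nu> c q \<subseteq> supp c"
  by (auto simp: Amin_def)

lemma finite_Amin: "finite (supp c) \<Longrightarrow> finite (Amin \<nu> c q)"
  using Amin_subset_supp by (rule finite_subset)

lemma phi_eq_of_Amin: "w \<in> Amin \<nu> c q \<Longrightarrow> w' \<in> Amin \<nu> c q \<Longrightarrow> phi \<nu> c q w = phi \<nu> c q w'"
  by (auto simp: Amin_def intro: antisym)

lemma Amin_memI:
  "w0 \<in> Amin \<nu> c q \<Longrightarrow> w \<in> supp c \<Longrightarrow> phi \<nu> c q w = phi \<nu> c q w0 \<Longrightarrow> w \<in> Amin \<nu> c q"
  by (simp add: Amin_def)

lemma phi_less_of_notin_Amin:
  "w0 \<in> Amin \<nu> c q \<Longrightarrow> w \<in> supp c \<Longrightarrow> w \<notin> Amin \<nu> c q \<Longrightarrow> phi \<nu> c q w0 < phi \<nu> c q w"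
  using Amin_memI[of w0 \<nu> c q w] unfolding Amin_def by force

lemma phi_add: "phi \<nu> c (q + z) w = phi \<nu> c q w - z \<bullet> rvec w"
  by (simp add: phi_def inner_add_left)

lemma phi_affine_combination:
  "a + b = 1 \<Longrightarrow> phi \<nu> c (a *\<^sub>R x + b *\<^sub>R y) w = a * phi \<nu> c x w + b * phi \<nu> c y w"
  by (simp add: phi_def inner_add_left algebra_simps flip: eq_diff_eq)

lemma Amin_eqI:
  assumes "v \<in> S" "S \<subseteq> supp c"
    and "\<And>w. w \<in> S \<Longrightarrow> phi \<nu> c q w = phi \<nu> c q v"
    and "\<And>w. w \<in> supp c \<Longrightarrow> w \<notin> S \<Longrightarrow> phi \<nu> c q v < phi \<nu> c q w"
  shows "Amin \<nu> c q = S"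
proof (intro antisym subsetI)
  fix w assume w: "w \<in> Amin \<nu> c q"
  show "w \<in> S"
  proof (rule ccontr)
    assume "w \<notin> S"
    then have "phi \<nu> c q v < phi \<nu> c q w" using assms(4) w Amin_subset_supp by blast
    moreover have "phi \<nu> c q w \<le> phi \<nu> c q v" using w assms(1,2) unfolding Amin_def by blast
    ultimately show False by simp
  qed
next
  fix w assume w: "w \<in> S"
  have "phi \<nu> c q w \<le> phi \<nu> c q w'" if w': "w' \<in> supp c" for w'
  proof (cases "w' \<in> S")
    case True
    then show ?thesis using assms(3)[OF w] assms(3)[OF True] by simp
  next
    case False
    then show ?thesis using assms(3)[OF w] assms(4)[OF w'] by simp
  qed
  then show "w \<in> Amin \<nu> c q" using w assms(2) unfolding Amin_def by blast
qed

text \<open>Moving \<open>q\<close> along \<open>z\<close> until the first monomial with \<open>z \<bullet> rvec w > z \<bullet> rvec w0\<close> becomes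
  minimal.\<close>

lemma Amin_enlarge_along_normal:
  assumes fin: "finite (supp c)" and w0: "w0 \<in> Amin \<nu> c q"
    and normal: "\<And>w. w \<in> Amin \<nu> c q \<Longrightarrow> z \<bullet> rvec w = z \<bullet> rvec w0"
    and w1: "w1 \<in> supp c" "z \<bullet> rvec w0 < z \<bullet> rvec w1"
  obtains q' where "Amin \<nu> c q \<subset> Amin \<nu> c q'"
proof -
  define \<rho> where "\<rho> w = z \<bullet> rvec w - z \<bullet> rvec w0" for w
  define D where "D w = phi \<nu> c q w - phi \<nu> c q w0" for w
  define T where "T = {w\<in>supp c. \<rho> w > 0}"
  have T: "finite T" "w1 \<in> T" using fin w1 unfolding T_def \<rho>_def by auto
  define t where "t = Min ((\<lambda>w. D w / \<rho> w) ` T)"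
  have D_nonneg: "D w \<ge> 0" if "w \<in> supp c" for w
    using w0 that unfolding D_def Amin_def by auto
  have t_le: "t * \<rho> w \<le> D w" if "w \<in> T" for w
  proof -
    have "t \<le> D w / \<rho> w" unfolding t_def using T(1) that by (intro Min_le) auto
    then show ?thesis using that unfolding T_def by (simp add: pos_le_divide_eq)
  qed
  obtain ws where ws: "ws \<in> T" "t = D ws / \<rho> ws"
    unfolding t_def using T Min_in[of "(\<lambda>w. D w / \<rho> w) ` T"] by fastforce
  have "t \<ge> 0" using ws D_nonneg unfolding T_def by auto
  define q' where "q' = q + t *\<^sub>R z"
  have shift: "phi \<nu> c q' w - phi \<nu> c q' w0 = D w - t * \<rho> w" for w
    unfolding q'_def phi_add D_def \<rho>_def by (simp add: algebra_simps)
  have "phi \<nu> c q' w0 \<le> phi \<nu> c q' w" if "w \<in> supp c" for w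
  proof (cases "\<rho> w > 0")
    case True
    then show ?thesis using t_le[of w] shift[of w] that unfolding T_def by simp
  next
    case False
    then show ?thesis
      using shift[of w] D_nonneg[OF that] \<open>t \<ge> 0\<close> mult_nonneg_nonpos[of t "\<rho> w"] by simp
  qed
  then have w0': "w0 \<in> Amin \<nu> c q'" using w0 Amin_subset_supp unfolding Amin_def by blast
  have "Amin \<nu> c q \<subseteq> Amin \<nu> c q'"
  proof
    fix w assume w: "w \<in> Amin \<nu> c q"
    then have "D w = 0" "\<rho> w = 0" using phi_eq_of_Amin[OF w w0] normal[OF w] D_def \<rho>_def by auto
    then show "w \<in> Amin \<nu> c q'"
      using Amin_memI[OF w0'] w Amin_subset_supp shift[of w] by fastforce
  qed
  moreover have "ws \<in> Amin \<nu> c q'"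
    using Amin_memI[OF w0'] shift[of ws] ws unfolding T_def by auto
  moreover have "ws \<notin> Amin \<nu> c q" using normal ws unfolding T_def \<rho>_def by force
  ultimately show ?thesis using that by blast
qed

lemma Amin_enlarge:
  assumes fin: "finite (supp c)" and w0: "w0 \<in> Amin \<nu> c q"
    and "affine hull (rvec ` Amin \<nu> c q) \<noteq> affine hull (rvec ` supp c)"
  obtains q' where "Amin \<nu> c q \<subset> Amin \<nu> c q'"
proof -
  have "affine hull (rvec ` Amin \<nu> c q) \<subseteq> affine hull (rvec ` supp c)"
    using Amin_subset_supp by (intro hull_mono image_mono)
  with assms(3) have "\<not> rvec ` supp c \<subseteq> affine hull (rvec ` Amin \<nu> c q)"
    by (metis hull_hull hull_mono subset_antisym)
  then obtain w1 where w1: "w1 \<in> supp c" "rvec w1 \<notin> affine hull (rvec ` Amin \<nu> c q)" by blast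
  obtain z where "\<And>y. y \<in> rvec ` Amin \<nu> c q \<Longrightarrow> z \<bullet> y = z \<bullet> rvec w0" "z \<bullet> rvec w0 < z \<bullet> rvec w1"
    using normal_to_affine_hull_exists[OF imageI[OF w0] w1(2)] by blast
  then show ?thesis
    using Amin_enlarge_along_normal[OF fin w0 _ w1(1)] that by blast
qed

lemma Amin_subset_full_dimensional:
  assumes fin: "finite (supp c)" and w0: "w0 \<in> Amin \<nu> c q"
  shows "\<exists>q'. Amin \<nu> c q \<subseteq> Amin \<nu> c q' \<and>
    affine hull (rvec ` Amin \<nu> c q') = affine hull (rvec ` supp c)"
  using w0
proof (induction "card (supp c) - card (Amin \<nu> c q)" arbitrary: q rule: less_induct)
  case less
  show ?case
  proof (cases "affine hull (rvec ` Amin \<nu> c q) = affine hull (rvec ` supp c)")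
    case False
    then obtain q' where q': "Amin \<nu> c q \<subset> Amin \<nu> c q'"
      using Amin_enlarge[OF fin less.prems] by blast
    then have "card (Amin \<nu> c q) < card (Amin \<nu> c q')"
      using fin by (simp add: psubset_card_mono finite_Amin)
    moreover have "card (Amin \<nu> c q') \<le> card (supp c)"
      using fin Amin_subset_supp by (intro card_mono)
    ultimately have "card (supp c) - card (Amin \<nu> c q') < card (supp c) - card (Amin \<nu> c q)"
      by linarith
    moreover have "w0 \<in> Amin \<nu> c q'" using q' less.prems by blast
    ultimately show ?thesis using less.hyps q' by (meson psubset_imp_subset subset_trans)
  qed blast
qed

lemma inj_rvec: "inj rvec"
  by (auto simp: inj_def rvec_def vec_eq_iff)

lemma rvec_in_int_vecs: "rvec w \<in> int_vecs"
  by (simp add: rvec_def int_vecs_iff)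

lemma int_comb_insert_zero:
  assumes "finite B"
  shows "int_comb (insert 0 B) \<subseteq> int_comb B"
proof (cases "0 \<in> B")
  case False
  show ?thesis
  proof
    fix x assume "x \<in> int_comb (insert 0 B)"
    then obtain a where "x = (\<Sum>s\<in>insert 0 B. of_int (a s) *\<^sub>R s)" unfolding int_comb_def by auto
    also have "\<dots> = (\<Sum>s\<in>B. of_int (a s) *\<^sub>R s)" using assms False by simp
    finally show "x \<in> int_comb B" unfolding int_comb_def by auto
  qed
qed (simp add: insert_absorb)

lemma smooth_trop_edges_saturated:
  assumes fin: "finite (supp c)" and smooth: "smooth_trop \<nu> c" and v: "v \<in> Amin \<nu> c q"
    and full: "affine hull (rvec ` Amin \<nu> c q) = affine hull (rvec ` supp c)"
  defines "B \<equiv> (\<lambda>w. rvec w - rvec v) ` (Amin \<nu> c q - {v})"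
  shows "independent B" and "span B \<inter> int_vecs \<subseteq> int_comb B"
proof -
  have "rvec ` Amin \<nu> c q - {rvec v} = rvec ` (Amin \<nu> c q - {v})"
    by (simp add: image_set_diff[OF inj_rvec])
  then have "(\<lambda>x. - rvec v + x) ` (rvec ` Amin \<nu> c q - {rvec v}) = B"
    unfolding B_def by (simp add: image_image)
  then show "independent B"
    using smooth v affine_dependent_iff_dependent2[of "rvec v" "rvec ` Amin \<nu> c q"]
    unfolding smooth_trop_def by auto
  have "span B \<inter> int_vecs \<subseteq> span {a - b |a b. a \<in> rvec ` supp c \<and> b \<in> rvec ` supp c} \<inter> int_vecs"
    using Amin_subset_supp v unfolding B_def by (intro Int_mono span_mono) blast+
  also have "\<dots> \<subseteq> int_comb ((\<lambda>w. rvec w - rvec v) ` Amin \<nu> c q)"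
    using smooth v full unfolding smooth_trop_def by blast
  also have "(\<lambda>w. rvec w - rvec v) ` Amin \<nu> c q = insert 0 B"
    using v unfolding B_def by (auto simp: image_iff)
  also have "int_comb (insert 0 B) \<subseteq> int_comb B"
    unfolding B_def using fin by (simp add: int_comb_insert_zero finite_Amin)
  finally show "span B \<inter> int_vecs \<subseteq> int_comb B" .
qed

text \<open>Smoothness makes every simplex of the subdivision a face of a unimodular maximal simplex, so
  each of its vertices is separated from the opposite face by an integral functional.\<close>

lemma smooth_trop_vertex_dual:
  assumes fin: "finite (supp c)" and smooth: "smooth_trop \<nu> c"
    and u: "u \<in> Amin \<nu> c r" and v: "v \<in> Amin \<nu> c r" and "u \<noteq> v"
  obtains z where "z \<in> int_vecs" "z \<bullet> (rvec v - rvec u) = 1"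
    "\<And>w. w \<in> Amin \<nu> c r \<Longrightarrow> w \<noteq> u \<Longrightarrow> z \<bullet> (rvec w - rvec v) = 0"
proof -
  obtain q where M: "Amin \<nu> c r \<subseteq> Amin \<nu> c q"
      "affine hull (rvec ` Amin \<nu> c q) = affine hull (rvec ` supp c)"
    using Amin_subset_full_dimensional[OF fin u] by blast
  define B where "B = (\<lambda>w. rvec w - rvec v) ` (Amin \<nu> c q - {v})"
  have vq: "v \<in> Amin \<nu> c q" using M(1) v by blast
  have "finite B" unfolding B_def using fin by (simp add: finite_Amin)
  moreover have "B \<subseteq> int_vecs" unfolding B_def by (auto intro: int_vecs_diff rvec_in_int_vecs)
  moreover have "rvec u - rvec v \<in> B" using M(1) u \<open>u \<noteq> v\<close> unfolding B_def by blast
  ultimately obtain z where z: "z \<in> int_vecs" "z \<bullet> (rvec u - rvec v) = 1"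
      "\<forall>b\<in>B - {rvec u - rvec v}. z \<bullet> b = 0"
    using saturated_basis_dual smooth_trop_edges_saturated[OF fin smooth vq M(2)]
    unfolding B_def by blast
  show ?thesis
  proof (rule that[of "- z"])
    show "- z \<in> int_vecs" using z(1) by (simp add: int_vecs_iff)
    show "- z \<bullet> (rvec v - rvec u) = 1" using z(2) by (simp add: inner_diff_right)
  next
    fix w assume w: "w \<in> Amin \<nu> c r" "w \<noteq> u"
    show "- z \<bullet> (rvec w - rvec v) = 0"
    proof (cases "w = v")
      case False
      then have "rvec w - rvec v \<in> B - {rvec u - rvec v}"
        using w M(1) unfolding B_def by (auto simp: inj_eq[OF inj_rvec])
      then show ?thesis using z(3) by simp
    qed simp
  qed
qed

section \<open>Cells of the tropical hypersurface\<close>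

lemma convex_Amin_stratum:
  assumes "S \<noteq> {}"
  shows "convex {q. Amin \<nu> c q = S}"
  unfolding convex_def
proof (intro ballI allI impI)
  fix x y and a b :: real
  assume x: "x \<in> {q. Amin \<nu> c q = S}" and y: "y \<in> {q. Amin \<nu> c q = S}"
    and ab: "0 \<le> a" "0 \<le> b" "a + b = 1"
  define z where "z = a *\<^sub>R x + b *\<^sub>R y"
  have phi_z: "phi \<nu> c z w = a * phi \<nu> c x w + b * phi \<nu> c y w" for w
    unfolding z_def by (rule phi_affine_combination[OF ab(3)])
  have Sx: "Amin \<nu> c x = S" and Sy: "Amin \<nu> c y = S" using x y by auto
  have "S \<subseteq> Amin \<nu> c z"
  proof
    fix w assume w: "w \<in> S"
    have "phi \<nu> c z w \<le> phi \<nu> c z w'" if "w' \<in> supp c" for w'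
      using w that Sx Sy ab unfolding phi_z Amin_def by (auto intro!: add_mono mult_left_mono)
    then show "w \<in> Amin \<nu> c z" using w Sx Amin_subset_supp unfolding Amin_def by blast
  qed
  moreover have "w \<in> S" if w: "w \<in> Amin \<nu> c z" for w
  proof (rule ccontr)
    assume "w \<notin> S"
    obtain s where s: "s \<in> S" using assms by auto
    have "w \<in> supp c" "s \<in> supp c" using w s Sx Amin_subset_supp by blast+
    then have "phi \<nu> c x s - phi \<nu> c x w < 0" "phi \<nu> c y s - phi \<nu> c y w < 0"
      using phi_less_of_notin_Amin[of s \<nu> c _ w] s Sx Sy \<open>w \<notin> S\<close> by auto
    from convex_bound_lt[OF this ab] have "phi \<nu> c z s < phi \<nu> c z w"
      unfolding phi_z by (simp add: algebra_simps)
    moreover have "phi \<nu> c z w \<le> phi \<nu> c z s" using w \<open>s \<in> supp c\<close> unfolding Amin_def by auto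
    ultimately show False by simp
  qed
  ultimately show "a *\<^sub>R x + b *\<^sub>R y \<in> {q. Amin \<nu> c q = S}" unfolding z_def by blast
qed

lemma trop_hat_cell_eq_closure_stratum:
  assumes "trop_hat_cell \<nu> c P" and "p \<in> rel_interior P"
  shows "P = closure {q. Amin \<nu> c q = Amin \<nu> c p}"
proof -
  obtain S where "card S > 1" and P: "P = closure {q. Amin \<nu> c q = S}"
    using assms(1) unfolding trop_hat_cell_def by blast
  then have "S \<noteq> {}" by auto
  then have "rel_interior P = rel_interior {q. Amin \<nu> c q = S}"
    using convex_rel_interior_closure[OF convex_Amin_stratum] P by blast
  then have "Amin \<nu> c p = S" using assms(2) rel_interior_subset by blast
  with P show ?thesis by simp
qed

lemma closure_Amin_stratum_phi_le:
  assumes "w \<in> S" "w' \<in> supp c"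
  shows "closure {q. Amin \<nu> c q = S} \<subseteq> {q. phi \<nu> c q w \<le> phi \<nu> c q w'}"
proof (rule closure_minimal)
  show "{q. Amin \<nu> c q = S} \<subseteq> {q. phi \<nu> c q w \<le> phi \<nu> c q w'}"
    using assms unfolding Amin_def by auto
  show "closed {q. phi \<nu> c q w \<le> phi \<nu> c q w'}"
    unfolding phi_def by (intro closed_Collect_le continuous_intros)
qed

text \<open>Starting from a point of a stratum and moving towards a point where the same monomials tie,
  the tie persists while the other monomials, being strictly larger at the start, stay larger
  for a while.\<close>

lemma Amin_stratum_segment:
  assumes fin: "finite (supp c)" and p: "Amin \<nu> c p = S" and v: "v \<in> S"
    and q: "\<forall>w\<in>S. phi \<nu> c q w = phi \<nu> c q v"
  obtains t where "t > 0" "Amin \<nu> c (p + t *\<^sub>R (q - p)) = S"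
proof -
  define g where "g w t = phi \<nu> c (p + t *\<^sub>R (q - p)) w - phi \<nu> c (p + t *\<^sub>R (q - p)) v" for w t
  have g: "g w t = (1 - t) * (phi \<nu> c p w - phi \<nu> c p v) + t * (phi \<nu> c q w - phi \<nu> c q v)" for w t
  proof -
    have "p + t *\<^sub>R (q - p) = (1 - t) *\<^sub>R p + t *\<^sub>R q" by (simp add: algebra_simps)
    then show ?thesis
      unfolding g_def by (simp only: phi_affine_combination[OF diff_add_cancel]) (simp add: algebra_simps)
  qed
  have "\<forall>\<^sub>F t in at_right 0. g w t > 0" if w: "w \<in> supp c - S" for w
  proof -
    have "phi \<nu> c p v < phi \<nu> c p w" using phi_less_of_notin_Amin[of v \<nu> c p w] w v p by auto
    moreover have "((\<lambda>t. g w t) \<longlongrightarrow> phi \<nu> c p w - phi \<nu> c p v) (at_right 0)"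
      unfolding g by (auto intro!: tendsto_eq_intros)
    ultimately show ?thesis by (simp add: order_tendstoD(1))
  qed
  then have "\<forall>\<^sub>F t in at_right 0. (\<forall>w\<in>supp c - S. g w t > 0) \<and> 0 < t"
    using fin by (intro eventually_conj eventually_ball_finite eventually_at_right_less) auto
  then obtain t where t: "\<forall>w\<in>supp c - S. g w t > 0" "0 < t"
    using eventually_happens trivial_limit_at_right_real by blast
  have tie: "g w t = 0" if "w \<in> S" for w
  proof -
    have "phi \<nu> c q w = phi \<nu> c q v" using q that by blast
    moreover have "phi \<nu> c p w = phi \<nu> c p v" using phi_eq_of_Amin[of w \<nu> c p v] p v that by blast
    ultimately show ?thesis unfolding g by simp
  qed
  have "S \<subseteq> supp c" using p Amin_subset_supp by blast
  then have "Amin \<nu> c (p + t *\<^sub>R (q - p)) = S"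
  proof (rule Amin_eqI[OF v])
    show "phi \<nu> c (p + t *\<^sub>R (q - p)) w = phi \<nu> c (p + t *\<^sub>R (q - p)) v" if "w \<in> S" for w
      using tie[OF that] unfolding g_def by simp
    show "phi \<nu> c (p + t *\<^sub>R (q - p)) v < phi \<nu> c (p + t *\<^sub>R (q - p)) w"
      if "w \<in> supp c" "w \<notin> S" for w
      using t(1) that unfolding g_def by simp
  qed
  with t(2) that show ?thesis by blast
qed

lemma affine_hull_closure_Amin_stratum:
  assumes fin: "finite (supp c)" and p: "Amin \<nu> c p = S" and v: "v \<in> S"
  shows "affine hull (closure {q. Amin \<nu> c q = S}) = {q. \<forall>w\<in>S. phi \<nu> c q w = phi \<nu> c q v}"
proof -
  define C where "C = {q. Amin \<nu> c q = S}"
  define L where "L = {q. \<forall>w\<in>S. phi \<nu> c q w = phi \<nu> c q v}"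
  have "affine L" unfolding affine_def L_def by (auto simp: phi_affine_combination)
  moreover have "C \<subseteq> L" unfolding C_def L_def using v phi_eq_of_Amin by blast
  ultimately have "affine hull C \<subseteq> L" by (intro hull_minimal)
  moreover have "L \<subseteq> affine hull C"
  proof
    fix q assume "q \<in> L"
    then have "\<forall>w\<in>S. phi \<nu> c q w = phi \<nu> c q v" unfolding L_def by simp
    then obtain t where t: "t > 0" "Amin \<nu> c (p + t *\<^sub>R (q - p)) = S"
      by (rule Amin_stratum_segment[OF fin p v])
    have "p \<in> C" using p unfolding C_def by simp
    have "q = (1 - 1 / t) *\<^sub>R p + (1 / t) *\<^sub>R (p + t *\<^sub>R (q - p))"
      using t(1) by (simp add: algebra_simps)
    also have "\<dots> \<in> affine hull C"
      using t(2) \<open>p \<in> C\<close> unfolding C_def by (intro mem_affine affine_affine_hull hull_inc) auto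
    finally show "q \<in> affine hull C" .
  qed
  ultimately show ?thesis unfolding C_def L_def by simp
qed

section \<open>Passing to the quotient by \<open>\<real>(1,\<dots>,1)\<close>\<close>

lemma bounded_linear_proj: "bounded_linear proj"
  unfolding linear_conv_bounded_linear[symmetric]
  by (rule linearI) (simp_all add: proj_def vec_eq_iff algebra_simps)

lemma proj_in_int_vecs: "x \<in> int_vecs \<Longrightarrow> proj x \<in> int_vecs"
  by (simp add: int_vecs_iff proj_def)

lemma sum_UNIV_option:
  "(\<Sum>i\<in>(UNIV::'a::finite option set). g i) = g None + (\<Sum>i\<in>UNIV. g (Some i))"
proof -
  have "(\<Sum>i\<in>(UNIV::'a option set). g i) = (\<Sum>i\<in>insert None (range Some). g i)"
    by (simp add: UNIV_option_conv)
  also have "\<dots> = g None + (\<Sum>i\<in>range Some. g i)" by (subst sum.insert) auto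
  also have "(\<Sum>i\<in>range Some. g i) = (\<Sum>i\<in>UNIV. g (Some i))" by (subst sum.reindex) auto
  finally show ?thesis .
qed

lemma inner_eq_proj_inner:
  fixes x b :: "real^('n::finite option)"
  assumes "(\<Sum>i\<in>UNIV. b $ i) = 0"
  shows "x \<bullet> b = proj x \<bullet> (\<chi> i. b $ Some i)"
proof -
  have "b $ None = - (\<Sum>i\<in>UNIV. b $ Some i)" using assms sum_UNIV_option[of "\<lambda>i. b $ i"] by simp
  then show ?thesis
    by (simp add: inner_vec_def sum_UNIV_option proj_def left_diff_distrib sum_subtractf
        sum_distrib_left)
qed

text \<open>For homogeneous \<open>f\<close> the differences of the \<open>\<phi>\<^sub>q\<close> are invariant under \<open>q \<mapsto> q + t(1,\<dots>,1)\<close>,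
  hence functions on \<open>\<real>\<^sup>n\<close>.\<close>

lemma inner_rvec_diff_eq_proj:
  assumes hom: "homogeneous_poly c" and "w1 \<in> supp c" "w2 \<in> supp c"
  shows "r \<bullet> (rvec w1 - rvec w2) = proj r \<bullet> (\<chi> i. (rvec w1 - rvec w2) $ Some i)"
proof -
  obtain d where "\<forall>w\<in>supp c. (\<Sum>i\<in>UNIV. w $ i) = d" using hom unfolding homogeneous_poly_def by blast
  then have "(\<Sum>i\<in>UNIV. (rvec w1 - rvec w2) $ i) = 0"
    using assms(2,3) by (simp add: rvec_def sum_subtractf flip: of_nat_sum)
  then show ?thesis by (rule inner_eq_proj_inner)
qed

lemma phi_diff_eq_proj:
  assumes "homogeneous_poly c" and "w1 \<in> supp c" "w2 \<in> supp c"
  shows "phi \<nu> c r w1 - phi \<nu> c r w2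
    = \<nu> (c w1) - \<nu> (c w2) + proj r \<bullet> (\<chi> i. (rvec w2 - rvec w1) $ Some i)"
  unfolding phi_def inner_rvec_diff_eq_proj[OF assms(1,3,2), symmetric] by (simp add: inner_diff_right)

lemma proj_mem_tie_iff:
  assumes "homogeneous_poly c" and "w1 \<in> supp c" "w2 \<in> supp c"
  shows "proj r \<in> proj ` {r. phi \<nu> c r w1 = phi \<nu> c r w2} \<longleftrightarrow> phi \<nu> c r w1 = phi \<nu> c r w2"
  using phi_diff_eq_proj[OF assms, of \<nu>] by (auto simp: image_iff) (metis diff_eq_diff_eq)

lemma cell_facet_functional_primitive:
  fixes c :: "nat^('n::finite option) \<Rightarrow> 'k::zero" and P :: "(real^'n) set"
  assumes fin: "finite (supp c)" and hom: "homogeneous_poly c" and smooth: "smooth_trop \<nu> c"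
    and simplex: "Amin \<nu> c r = insert u (Amin \<nu> c p)" and u: "u \<notin> Amin \<nu> c p"
    and v: "v \<in> Amin \<nu> c p"
    and hull: "affine hull P = proj ` {q. \<forall>w\<in>Amin \<nu> c p. phi \<nu> c q w = phi \<nu> c q v}"
  shows "\<exists>x\<in>dir_lattice P. x \<bullet> (\<chi> i. (rvec v - rvec u) $ Some i) = 1"
proof -
  have "u \<in> Amin \<nu> c r" "v \<in> Amin \<nu> c r" "u \<noteq> v" using simplex u v by auto
  then obtain z where z: "z \<in> int_vecs" "z \<bullet> (rvec v - rvec u) = 1"
    and tie: "\<And>w. w \<in> Amin \<nu> c r \<Longrightarrow> w \<noteq> u \<Longrightarrow> z \<bullet> (rvec w - rvec v) = 0"
    using smooth_trop_vertex_dual[OF fin smooth] by blast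
  have "p + z \<in> {q. \<forall>w\<in>Amin \<nu> c p. phi \<nu> c q w = phi \<nu> c q v}"
    using tie simplex u phi_eq_of_Amin[OF _ v] by (auto simp: phi_add inner_diff_right)
  moreover have "p \<in> {q. \<forall>w\<in>Amin \<nu> c p. phi \<nu> c q w = phi \<nu> c q v}"
    using phi_eq_of_Amin[OF _ v] by blast
  ultimately have "proj (p + z) - proj p \<in> span {a - b |a b. a \<in> P \<and> b \<in> P}"
    by (intro diff_affine_hull_in_span_diffs) (simp_all add: hull)
  moreover have "proj (p + z) - proj p = proj z"
    by (simp add: linear_add[OF bounded_linear.linear[OF bounded_linear_proj]])
  moreover have "u \<in> supp c" "v \<in> supp c" using simplex v Amin_subset_supp by blast+
  then have "proj z \<bullet> (\<chi> i. (rvec v - rvec u) $ Some i) = 1"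
    using z(2) inner_rvec_diff_eq_proj[OF hom, of v u z] by simp
  ultimately show ?thesis
    unfolding dir_lattice_def using proj_in_int_vecs[OF z(1)] by auto
qed

theorem lemma5p3:
  fixes \<nu> :: "'k::{alg_closed_field, field_char_0} \<Rightarrow> real"
    and c :: "nat^('n::finite option) \<Rightarrow> 'k"
    and Phat :: "(real^('n option)) set"
    and p q :: "real^('n option)"
    and u v v' :: "nat^('n option)"
  assumes val: "nonarch_valuation \<nu>"
    and fin: "finite (supp c)"
    and hom: "homogeneous_poly c"
    and allvars: "involves_all_vars c"
    and irred: "irreducible_mpoly c"
    and notcone: "\<not> is_cone c"
    and smooth: "smooth_trop \<nu> c"
    and cell: "trop_hat_cell \<nu> c Phat"
    and p_int: "p \<in> rel_interior Phat"
    and u_supp: "u \<in> supp c"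
    and u_notin: "u \<notin> Amin \<nu> c p"
    and simplex: "\<exists>r. Amin \<nu> c r = insert u (Amin \<nu> c p)"
    and v': "v' \<in> Amin \<nu> c p"
    and v: "v \<in> Amin \<nu> c p"
    and q: "q \<in> affine hull Phat"
  shows "lattice_dist (proj ` Phat)
           (affine hull (proj ` Phat) \<inter> proj ` {r. phi \<nu> c r u = phi \<nu> c r v'})
           (proj q)
         = phi \<nu> c q u - phi \<nu> c q v"
proof -
  define L where "L = {r. \<forall>w\<in>Amin \<nu> c p. phi \<nu> c r w = phi \<nu> c r v}"
  define P where "P = proj ` Phat"
  define b where "b = (\<chi> i. (rvec v - rvec u) $ Some i)"
  define \<alpha> where "\<alpha> = \<nu> (c u) - \<nu> (c v)"
  obtain r0 where r0: "Amin \<nu> c r0 = insert u (Amin \<nu> c p)" using simplex by blast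
  have supp: "v \<in> supp c" "v' \<in> supp c" using v v' Amin_subset_supp by blast+
  have Phat: "Phat = closure {r. Amin \<nu> c r = Amin \<nu> c p}"
    by (rule trop_hat_cell_eq_closure_stratum[OF cell p_int])
  have hull: "affine hull P = proj ` L"
    unfolding P_def L_def affine_hull_linear_image[OF bounded_linear_proj, symmetric] Phat
    using affine_hull_closure_Amin_stratum[OF fin refl v] by simp
  have f: "phi \<nu> c r u - phi \<nu> c r v = \<alpha> + proj r \<bullet> b" for r
    unfolding \<alpha>_def b_def by (rule phi_diff_eq_proj[OF hom u_supp supp(1)])
  have "proj r \<in> proj ` {r. phi \<nu> c r u = phi \<nu> c r v'} \<longleftrightarrow> \<alpha> + proj r \<bullet> b = 0" if "r \<in> L" for r
    using proj_mem_tie_iff[OF hom u_supp supp(2)] f[of r] that v' unfolding L_def by auto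
  then have facet: "affine hull P \<inter> proj ` {r. phi \<nu> c r u = phi \<nu> c r v'}
      = affine hull P \<inter> {y. \<alpha> + y \<bullet> b = 0}"
    unfolding hull by auto
  have "lattice_dist P (affine hull P \<inter> {y. \<alpha> + y \<bullet> b = 0}) (proj q) = \<alpha> + proj q \<bullet> b"
  proof (rule lattice_dist_affine_function[where l = "\<lambda>y. y \<bullet> b"])
    show "linear (\<lambda>y. y \<bullet> b)" by (simp add: bounded_linear_inner_left bounded_linear.linear)
    show "x \<bullet> b \<in> \<int>" if "x \<in> dir_lattice P" for x
      using that unfolding dir_lattice_def b_def
      by (auto intro!: inner_int_vecs simp: int_vecs_iff rvec_def)
    show "\<exists>x\<in>dir_lattice P. x \<bullet> b = 1"
      unfolding b_def using cell_facet_functional_primitive[OF fin hom smooth r0 u_notin v] hull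
      unfolding L_def by blast
    show "0 \<le> \<alpha> + y \<bullet> b" if y: "y \<in> P" for y
    proof -
      obtain r where "r \<in> Phat" "y = proj r" using y unfolding P_def by blast
      then show ?thesis
        using closure_Amin_stratum_phi_le[OF v u_supp, where \<nu> = \<nu>] f[of r] unfolding Phat by auto
    qed
    show "\<exists>y\<in>P. 0 < \<alpha> + y \<bullet> b"
      using phi_less_of_notin_Amin[OF v u_supp u_notin] f[of p] p_int rel_interior_subset
      unfolding P_def by force
    show "\<exists>y\<in>affine hull P. \<alpha> + y \<bullet> b = 0"
    proof (rule bexI[of _ "proj r0"])
      have "v \<in> Amin \<nu> c r0" using r0 v by blast
      then have "\<forall>w\<in>insert u (Amin \<nu> c p). phi \<nu> c r0 w = phi \<nu> c r0 v"
        using phi_eq_of_Amin[of _ \<nu> c r0 v] unfolding r0 by blast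
      then show "\<alpha> + proj r0 \<bullet> b = 0" "proj r0 \<in> affine hull P"
        using f[of r0] unfolding hull L_def by auto
    qed
    show "proj q \<in> affine hull P"
      using q unfolding P_def affine_hull_linear_image[OF bounded_linear_proj, symmetric] by blast
  qed
  then show ?thesis using facet f unfolding P_def by simp
qed

end
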